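(* Let $m$ be even, $\mathcal{A}\in T_{m,n}$, $\mathcal{B}\in S_{m,n}$ positive definite, $F(\mathbf{z})=F(\mathbf{x},t)=(t^2\mathcal{B}-\mathcal{A})\mathbf{x}^{m-1}$, $\tau\in(0,1)$, and let $H_\tau(\mathbf{z})=\begin{pmatrix}\Phi_\tau(\mathbf{z})\\ \mathbf{x}^\top\mathbf{x}-1\end{pmatrix}$ with $\Phi_\tau(\mathbf{z})=[\phi_\tau(x_i,F_i(\mathbf{z}))]_{i=1}^n$. Fix $\mathbf{z}=(\mathbf{x},t)\in\mathbb{R}^{n+1}$ and let $V\in\mathbb{R}^{n\times(n+1)}$ be the matrix produced by Procedure P (see context) with this $\tau$. Suppose $\nabla_{\mathbf{x}}F_i(\mathbf{z})^\top\mathbf{c}\neq0$ for all $i\in S_3$. Then $G=\begin{pmatrix}V\\ 2\mathbf{x}^\top\ \ 0\end{pmatrix}$ belongs to the B-subdifferential $\partial_BH_\tau(\mathbf{z})$.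
   Context: $(\mathcal{A}\mathbf{x}^{m-1})_i=\sum_{i_2,\ldots,i_m}a_{i i_2\ldots i_m}x_{i_2}\cdots x_{i_m}$; $\mathcal{B}$ symmetric with $\mathcal{B}\mathbf{x}^m>0$ for $\mathbf{x}\ne0$. $\phi_\tau(a,b)=\tau(a+b-\sqrt{a^2+b^2})+(1-\tau)a_+b_+$, $x_+=\max\{x,0\}$. $\partial_BG(\mathbf{z})$ is the set of limits of Jacobians $JG(\mathbf{z}^k)$ along sequences of differentiability points $\mathbf{z}^k\to\mathbf{z}$. $\nabla F_i(\mathbf{z})\in\mathbb{R}^{n+1}$ is the gradient of $F_i$ w.r.t. $\mathbf{z}=(\mathbf{x},t)$ and $\nabla_{\mathbf{x}}F_i(\mathbf{z})\in\mathbb{R}^n$ the gradient w.r.t. $\mathbf{x}$; $\mathbf{e}_i$ is the $i$th unit vector of $\mathbb{R}^n$, $\|\cdot\|$ the Euclidean norm, and $V_i$ the $i$th row of $V$. Procedure P (given $\tau\in(0,1]$ and $\mathbf{z}$): Let $S_1=\{i: x_i=0,F_i(\mathbf{z})=0\}$, $S_2=\{i:x_i=0,F_i(\mathbf{z})>0\}$, $S_3=\{i:x_i>0,F_i(\mathbf{z})=0\}$, $S_4=\{i:x_i>0,F_i(\mathbf{z})>0\}$. Let $\mathbf{c}\in\mathbb{R}^n$ with $c_i=1$ for $i\in S_1\cup S_2\cup S_3$ and $c_i=0$ otherwise. Writing $s_i=\nabla_{\mathbf{x}}F_i(\mathbf{z})^\top\mathbf{c}$: for $i\in S_1$: $V_i=\tau\big(1+\tfrac{c_i}{\|(c_i,s_i)\|}\big)(\mathbf{e}_i^\top,0)+\tau\big(1+\tfrac{s_i}{\|(c_i,s_i)\|}\big)\nabla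 F_i(\mathbf{z})^\top$; for $i\in S_3$: $V_i=(\tau+(1-\tau)x_i)\nabla F_i(\mathbf{z})^\top$ if $s_i<0$, and $V_i=\tau\nabla F_i(\mathbf{z})^\top$ otherwise; for $i\in S_4$: $V_i=\big[\tau\big(1-\tfrac{x_i}{\|(x_i,F_i(\mathbf{z}))\|}\big)+(1-\tau)F_i(\mathbf{z})\big](\mathbf{e}_i^\top,0)+\big[\tau\big(1-\tfrac{F_i(\mathbf{z})}{\|(x_i,F_i(\mathbf{z}))\|}\big)+(1-\tau)x_i\big]\nabla F_i(\mathbf{z})^\top$; for $i\notin S_1\cup S_3\cup S_4$: $V_i=\tau\big(1-\tfrac{x_i}{\|(x_i,F_i(\mathbf{z}))\|}\big)(\mathbf{e}_i^\top,0)+\tau\big(1-\tfrac{F_i(\mathbf{z})}{\|(x_i,F_i(\mathbf{z}))\|}\big)\nabla F_i(\mathbf{z})^\top$. *)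

theory Defs
  imports "HOL-Analysis.Analysis"
begin

text \<open>Real tensors of order m and dimension n: functions on index lists (only lists of
  length m matter); the index set is the finite type 'n (so n = CARD('n)).\<close>
type_synonym 'n tensor = "'n list \<Rightarrow> real"

definition tvec :: "nat \<Rightarrow> ('n::finite) tensor \<Rightarrow> real^'n \<Rightarrow> real^'n" where
  "tvec m A x = (\<chi> i. \<Sum>is\<in>{is::'n list. length is = m - 1}.
      A (i # is) * prod_list (map (\<lambda>j. x $ j) is))"

definition tpow :: "nat \<Rightarrow> ('n::finite) tensor \<Rightarrow> real^'n \<Rightarrow> real" where
  "tpow m A x = (\<Sum>is\<in>{is::'n list. length is = m}. A is * prod_list (map (\<lambda>j. x $ j) is))"

definition symmetric_tensor :: "nat \<Rightarrow> ('n::finite) tensor \<Rightarrow> bool" where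
  "symmetric_tensor m B \<longleftrightarrow>
     (\<forall>is js. length is = m \<longrightarrow> mset js = mset is \<longrightarrow> B is = B js)"

definition pos :: "real \<Rightarrow> real" where "pos x = max x 0"

definition phi :: "real \<Rightarrow> real \<Rightarrow> real \<Rightarrow> real" where
  "phi tau a b = tau * (a + b - sqrt (a\<^sup>2 + b\<^sup>2)) + (1 - tau) * pos a * pos b"

definition FF :: "nat \<Rightarrow> ('n::finite) tensor \<Rightarrow> 'n tensor \<Rightarrow> (real^'n) \<times> real \<Rightarrow> real^'n" where
  "FF m A B z = (\<chi> i. (snd z)\<^sup>2 * tvec m B (fst z) $ i - tvec m A (fst z) $ i)"

definition HH :: "nat \<Rightarrow> ('n::finite) tensor \<Rightarrow> 'n tensor \<Rightarrow> real \<Rightarrow> (real^'n) \<times> real \<Rightarrow> (real^'n) \<times> real" where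
  "HH m A B tau z = ((\<chi> i. phi tau (fst z $ i) (FF m A B z $ i)), fst z \<bullet> fst z - 1)"

definition grad :: "('a::real_inner \<Rightarrow> real) \<Rightarrow> 'a \<Rightarrow> 'a" where
  "grad f z = (THE D. GDERIV f z :> D)"

definition gradF :: "((real^'n) \<times> real \<Rightarrow> real^'n) \<Rightarrow> (real^'n) \<times> real \<Rightarrow> 'n \<Rightarrow> (real^'n) \<times> real" where
  "gradF F z i = grad (\<lambda>w. F w $ i) z"

definition gradxF :: "((real^'n) \<times> real \<Rightarrow> real^'n) \<Rightarrow> (real^'n) \<times> real \<Rightarrow> 'n \<Rightarrow> real^'n" where
  "gradxF F z i = fst (gradF F z i)"

definition S1 where "S1 F z = {i. fst z $ i = 0 \<and> F z $ i = 0}"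
definition S2 where "S2 F z = {i. fst z $ i = 0 \<and> F z $ i > 0}"
definition S3 where "S3 F z = {i. fst z $ i > 0 \<and> F z $ i = 0}"
definition S4 where "S4 F z = {i. fst z $ i > 0 \<and> F z $ i > 0}"

definition cvec :: "((real^'n) \<times> real \<Rightarrow> real^'n) \<Rightarrow> (real^'n) \<times> real \<Rightarrow> real^'n" where
  "cvec F z = (\<chi> i. if i \<in> S1 F z \<union> S2 F z \<union> S3 F z then 1 else 0)"

definition sval :: "((real^'n) \<times> real \<Rightarrow> real^'n) \<Rightarrow> (real^'n) \<times> real \<Rightarrow> 'n \<Rightarrow> real" where
  "sval F z i = gradxF F z i \<bullet> cvec F z"

definition procP :: "real \<Rightarrow> ((real^'n) \<times> real \<Rightarrow> real^'n) \<Rightarrow> (real^'n) \<times> real \<Rightarrow> 'n \<Rightarrow> (real^'n) \<times> real" where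
  "procP tau F z i =
    (let x = fst z $ i; f = F z $ i; c = cvec F z $ i; s = sval F z i;
         g = gradF F z i; e = (axis i 1, 0::real) in
     if i \<in> S1 F z then
       (tau * (1 + c / norm (c, s))) *\<^sub>R e + (tau * (1 + s / norm (c, s))) *\<^sub>R g
     else if i \<in> S3 F z then
       (if s < 0 then (tau + (1 - tau) * x) *\<^sub>R g else tau *\<^sub>R g)
     else if i \<in> S4 F z then
       (tau * (1 - x / norm (x, f)) + (1 - tau) * f) *\<^sub>R e
       + (tau * (1 - f / norm (x, f)) + (1 - tau) * x) *\<^sub>R g
     else
       (tau * (1 - x / norm (x, f))) *\<^sub>R e + (tau * (1 - f / norm (x, f))) *\<^sub>R g)"

text \<open>Convergence of the linear maps is entrywise
  (equivalently, in any norm, as the spaces are finite-dimensional).\<close>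
definition Bsubdiff :: "('a::euclidean_space \<Rightarrow> 'b::euclidean_space) \<Rightarrow> 'a \<Rightarrow> ('a \<Rightarrow> 'b) set" where
  "Bsubdiff G z = {L. \<exists>zk Dk. zk \<longlonglongrightarrow> z \<and> (\<forall>k. (G has_derivative Dk k) (at (zk k)))
       \<and> (\<forall>v. (\<lambda>k. Dk k v) \<longlonglongrightarrow> L v)}"

end

theory Submission
  imports Defs
begin

text \<open>The candidate matrix is a limit of genuine Jacobians of \<open>H\<^sub>\<tau>\<close> along the ray
  \<open>z\<^sub>\<epsilon> = z - \<epsilon> (c, 0)\<close>, \<open>\<epsilon> \<rightarrow> 0+\<close>. Along it every pair \<open>(x\<^sub>i - \<epsilon> c\<^sub>i, F\<^sub>i(z\<^sub>\<epsilon>))\<close> eventually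
  avoids the kinks \<open>{a = 0, b \<ge> 0} \<union> {b = 0, a \<ge> 0}\<close> of \<open>\<phi>\<^sub>\<tau>\<close>, so \<open>H\<^sub>\<tau>\<close> is differentiable at
  \<open>z\<^sub>\<epsilon>\<close>: for \<open>i \<in> S\<^sub>1\<close> the pair approaches the origin with slope \<open>(-1, -s\<^sub>i)\<close>, which produces the
  normalisation by \<open>\<parallel>(c\<^sub>i, s\<^sub>i)\<parallel>\<close>; for \<open>i \<in> S\<^sub>3\<close> the sign of \<open>F\<^sub>i(z\<^sub>\<epsilon>)\<close> is that of \<open>-s\<^sub>i\<close>, whence
  the hypothesis \<open>s\<^sub>i \<noteq> 0\<close>; for \<open>i \<in> S\<^sub>2\<close> the pair moves to \<open>a < 0\<close>, and otherwise it is already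
  off the kinks. The partial derivatives of \<open>\<phi>\<^sub>\<tau>\<close> then converge to the coefficients of \<open>V\<^sub>i\<close>,
  and \<open>\<nabla>F\<close> is continuous because \<open>F\<close> is polynomial.\<close>

lemma Bsubdiff_along_curve:
  fixes G :: "'a::euclidean_space \<Rightarrow> 'b::euclidean_space" and \<gamma> :: "real \<Rightarrow> 'a"
  assumes lim: "(\<gamma> \<longlongrightarrow> z) (at_right 0)"
    and deriv: "\<forall>\<^sub>F e in at_right 0. (G has_derivative D e) (at (\<gamma> e))"
    and Jac: "\<And>v. ((\<lambda>e. D e v) \<longlongrightarrow> L v) (at_right 0)"
  shows "L \<in> Bsubdiff G z"
proof -
  have r: "filterlim (\<lambda>k. inverse (real (Suc k))) (at_right (0::real)) sequentially"
    by (rule tendsto_imp_filterlim_at_right[OF LIMSEQ_inverse_real_of_nat]) simp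
  obtain N where N: "\<And>k. k \<ge> N \<Longrightarrow>
      (G has_derivative D (inverse (real (Suc k)))) (at (\<gamma> (inverse (real (Suc k)))))"
    using filterlim_iff[THEN iffD1, OF r, rule_format, OF deriv]
    unfolding eventually_sequentially by blast
  define e where "e k = inverse (real (Suc (k + N)))" for k
  have e: "filterlim e (at_right 0) sequentially"
    unfolding e_def by (rule filterlim_compose[OF r filterlim_add_const_nat_at_top])
  show ?thesis
    unfolding Bsubdiff_def
  proof (intro CollectI exI[of _ "\<lambda>k. \<gamma> (e k)"] exI[of _ "\<lambda>k. D (e k)"] conjI allI)
    show "(\<lambda>k. \<gamma> (e k)) \<longlonglongrightarrow> z" using filterlim_compose[OF lim e] .
    show "(G has_derivative D (e k)) (at (\<gamma> (e k)))" for k using N[of "k + N"] by (simp add: e_def)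
    show "(\<lambda>k. D (e k) v) \<longlonglongrightarrow> L v" for v using filterlim_compose[OF Jac e] .
  qed
qed

lemma has_derivative_along_ray:
  fixes f :: "'a::real_normed_vector \<Rightarrow> real"
  assumes "(f has_derivative f') (at z)"
  shows "((\<lambda>e. f (z - e *\<^sub>R d)) \<longlongrightarrow> f z) (at_right 0)"
    and "((\<lambda>e. (f (z - e *\<^sub>R d) - f z) / e) \<longlongrightarrow> - f' d) (at_right 0)"
proof -
  have "linear f'" using assms has_derivative_linear by blast
  have "((\<lambda>e::real. z - e *\<^sub>R d) has_derivative (\<lambda>h. - (h *\<^sub>R d))) (at 0)"
    by (auto intro!: derivative_eq_intros)
  moreover have "(f has_derivative f') (at (z - 0 *\<^sub>R d))" using assms by simp
  ultimately have "((\<lambda>e. f (z - e *\<^sub>R d)) has_derivative (\<lambda>h. f' (- (h *\<^sub>R d)))) (at 0)"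
    by (rule has_derivative_compose)
  moreover have "(\<lambda>h. f' (- (h *\<^sub>R d))) = (*) (- f' d)"
    by (simp add: fun_eq_iff linear_neg[OF \<open>linear f'\<close>] linear_scale[OF \<open>linear f'\<close>])
  ultimately have D: "((\<lambda>e. f (z - e *\<^sub>R d)) has_field_derivative - f' d) (at 0)"
    by (simp add: has_field_derivative_def)
  show "((\<lambda>e. f (z - e *\<^sub>R d)) \<longlongrightarrow> f z) (at_right 0)"
    using DERIV_isCont[OF D] by (auto simp: isCont_def intro: tendsto_mono[OF at_within_le_at])
  show "((\<lambda>e. (f (z - e *\<^sub>R d) - f z) / e) \<longlongrightarrow> - f' d) (at_right 0)"
    using D unfolding has_field_derivative_iff by (auto intro: tendsto_mono[OF at_within_le_at])
qed

lemma tendsto_slope_at_right_0D: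
  fixes b :: "real \<Rightarrow> real"
  assumes q: "((\<lambda>e. b e / e) \<longlongrightarrow> t) (at_right 0)"
  shows "(b \<longlongrightarrow> 0) (at_right 0)"
    and "0 < t \<Longrightarrow> \<forall>\<^sub>F e in at_right 0. 0 < b e"
    and "t < 0 \<Longrightarrow> \<forall>\<^sub>F e in at_right 0. b e < 0"
proof -
  have epos: "\<forall>\<^sub>F e in at_right (0::real). 0 < e" by (rule eventually_at_right_less)
  have "((\<lambda>e. e * (b e / e)) \<longlongrightarrow> 0) (at_right 0)"
    using tendsto_mult[OF tendsto_ident_at q] by simp
  then show "(b \<longlongrightarrow> 0) (at_right 0)"
    by (rule Lim_transform_eventually[OF _ eventually_mono[OF epos]]) simp
  show "\<forall>\<^sub>F e in at_right 0. 0 < b e" if "0 < t"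
    using order_tendstoD(1)[OF q that] epos by eventually_elim (simp add: zero_less_divide_iff)
  show "\<forall>\<^sub>F e in at_right 0. b e < 0" if "t < 0"
    using order_tendstoD(2)[OF q that] epos by eventually_elim (simp add: divide_less_0_iff)
qed

lemma has_derivative_grad:
  fixes f :: "'a::euclidean_space \<Rightarrow> real"
  assumes "(f has_derivative f') (at w)"
  shows "f' = (\<lambda>h. h \<bullet> grad f w)"
proof -
  define D where "D = (\<Sum>b\<in>Basis. f' b *\<^sub>R b)"
  have "linear f'" using assms has_derivative_linear by blast
  have f'D: "f' = (\<lambda>h. h \<bullet> D)"
  proof
    fix h
    have "f' h = f' (\<Sum>b\<in>Basis. (h \<bullet> b) *\<^sub>R b)" by (simp add: euclidean_representation)
    also have "\<dots> = (\<Sum>b\<in>Basis. (h \<bullet> b) * f' b)"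
      by (simp add: linear_sum[OF \<open>linear f'\<close>] linear_scale[OF \<open>linear f'\<close>])
    also have "\<dots> = h \<bullet> D" by (simp add: D_def inner_sum_right mult.commute)
    finally show "f' h = h \<bullet> D" .
  qed
  have D: "GDERIV f w :> D" unfolding gderiv_def using assms f'D by simp
  have "D' = D" if "GDERIV f w :> D'" for D'
  proof -
    have "(\<lambda>h. h \<bullet> D') = (\<lambda>h. h \<bullet> D)"
      using that D unfolding gderiv_def by (rule has_derivative_unique)
    then show ?thesis by (metis vector_eq_ldot)
  qed
  with D have "grad f w = D" unfolding grad_def by (rule the_equality)
  with f'D show ?thesis by simp
qed

lemma has_derivative_vec_lambda:
  fixes f :: "'a::real_normed_vector \<Rightarrow> 'n::finite \<Rightarrow> real"
  assumes "\<And>i. ((\<lambda>x. f x i) has_derivative (\<lambda>v. f' v i)) (at a within S)"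
  shows "((\<lambda>x. \<chi> i. f x i) has_derivative (\<lambda>v. \<chi> i. f' v i)) (at a within S)"
  using assms by (subst has_derivative_componentwise_within) (auto simp: Basis_vec_def inner_axis)

lemma sqrt_sum_squares_scale:
  fixes e u v :: real
  assumes "0 < e"
  shows "sqrt (u\<^sup>2 + v\<^sup>2) = e * sqrt ((u / e)\<^sup>2 + (v / e)\<^sup>2)"
proof -
  have "sqrt ((u / e)\<^sup>2 + (v / e)\<^sup>2) = sqrt (u\<^sup>2 + v\<^sup>2) / e"
    using assms by (simp add: power_divide add_divide_distrib[symmetric] real_sqrt_divide)
  then show ?thesis using assms by simp
qed

lemma tendsto_div_sqrt_sum_squares:
  fixes a b :: "'a \<Rightarrow> real"
  assumes a: "(a \<longlongrightarrow> x) F" and b: "(b \<longlongrightarrow> y) F" and xy: "(x, y) \<noteq> 0"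
  shows "((\<lambda>e. a e / sqrt ((a e)\<^sup>2 + (b e)\<^sup>2)) \<longlongrightarrow> x / norm (x, y)) F"
    and "((\<lambda>e. b e / sqrt ((a e)\<^sup>2 + (b e)\<^sup>2)) \<longlongrightarrow> y / norm (x, y)) F"
proof -
  have "sqrt (x\<^sup>2 + y\<^sup>2) \<noteq> 0" using xy by (simp add: zero_prod_def)
  then show "((\<lambda>e. a e / sqrt ((a e)\<^sup>2 + (b e)\<^sup>2)) \<longlongrightarrow> x / norm (x, y)) F"
    and "((\<lambda>e. b e / sqrt ((a e)\<^sup>2 + (b e)\<^sup>2)) \<longlongrightarrow> y / norm (x, y)) F"
    by (auto intro!: tendsto_intros a b simp: norm_Pair)
qed

lemma real_polynomial_function_has_derivative:
  fixes f :: "'a::real_normed_vector \<Rightarrow> real"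
  assumes "real_polynomial_function f"
  shows "\<exists>f'. (\<forall>w. (f has_derivative f' w) (at w)) \<and> (\<forall>v. real_polynomial_function (\<lambda>w. f' w v))"
  using assms
proof (induction rule: real_polynomial_function.induct)
  case (linear f)
  then show ?case by (intro exI[of _ "\<lambda>w. f"]) (auto intro: bounded_linear_imp_has_derivative)
next
  case (const c)
  show ?case by (intro exI[of _ "\<lambda>w v. 0"]) auto
next
  case (add f g)
  then obtain f' g'
    where "\<forall>w. (f has_derivative f' w) (at w)" "\<forall>v. real_polynomial_function (\<lambda>w. f' w v)"
      and "\<forall>w. (g has_derivative g' w) (at w)" "\<forall>v. real_polynomial_function (\<lambda>w. g' w v)"
    by blast
  then show ?case
    by (intro exI[of _ "\<lambda>w v. f' w v + g' w v"]) (auto intro: has_derivative_add)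
next
  case (mult f g)
  then obtain f' g'
    where "\<forall>w. (f has_derivative f' w) (at w)" "\<forall>v. real_polynomial_function (\<lambda>w. f' w v)"
      and "\<forall>w. (g has_derivative g' w) (at w)" "\<forall>v. real_polynomial_function (\<lambda>w. g' w v)"
    by blast
  then show ?case
    by (intro exI[of _ "\<lambda>w v. f w * g' w v + f' w v * g w"])
       (auto intro!: has_derivative_mult real_polynomial_function.intros(3,4) mult.hyps)
qed

lemma real_polynomial_function_grad:
  fixes f :: "'a::euclidean_space \<Rightarrow> real"
  assumes "real_polynomial_function f"
  shows "(f has_derivative (\<lambda>h. h \<bullet> grad f w)) (at w)"
    and "real_polynomial_function (\<lambda>w. v \<bullet> grad f w)"
proof -
  obtain f' where f': "\<And>w. (f has_derivative f' w) (at w)"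
      "\<And>v. real_polynomial_function (\<lambda>w. f' w v)"
    using real_polynomial_function_has_derivative[OF assms] by blast
  have f'_eq: "f' w = (\<lambda>h. h \<bullet> grad f w)" for w by (rule has_derivative_grad[OF f'(1)])
  show "(f has_derivative (\<lambda>h. h \<bullet> grad f w)) (at w)" using f'(1) by (simp add: f'_eq)
  show "real_polynomial_function (\<lambda>w. v \<bullet> grad f w)"
    using f'(2)[of v] by (simp add: f'_eq inner_commute)
qed

lemma real_polynomial_function_FF:
  fixes A B :: "('n::finite) tensor"
  shows "real_polynomial_function (\<lambda>w. FF m A B w $ i)"
proof -
  have coord: "real_polynomial_function (\<lambda>w::(real^'n)\<times>real. fst w $ j)" for j
    by (intro real_polynomial_function.intros(1)
        bounded_linear_compose[OF bounded_linear_vec_nth bounded_linear_fst])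
  have monomial:
    "real_polynomial_function (\<lambda>w::(real^'n)\<times>real. prod_list (map (\<lambda>j. fst w $ j) js))" for js
    by (induction js) (auto intro: coord)
  have "finite {js::'n list. length js = m - 1}"
    using finite_lists_length_eq[of "UNIV :: 'n set" "m - 1"] by simp
  then have "real_polynomial_function (\<lambda>w::(real^'n)\<times>real. tvec m C (fst w) $ i)" for C
    unfolding tvec_def by (auto intro!: real_polynomial_function_sum monomial)
  moreover have "real_polynomial_function (\<lambda>w::(real^'n)\<times>real. snd w)"
    by (rule real_polynomial_function.intros(1)[OF bounded_linear_snd])
  ultimately show ?thesis
    unfolding FF_def
    by (auto intro!: real_polynomial_function_diff real_polynomial_function.intros(4)
        real_polynomial_function_power)
qed

definition phi_smooth :: "real \<Rightarrow> real \<Rightarrow> bool" where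
  "phi_smooth a b \<longleftrightarrow> a < 0 \<or> b < 0 \<or> (0 < a \<and> 0 < b)"

definition phi_da :: "real \<Rightarrow> real \<Rightarrow> real \<Rightarrow> real" where
  "phi_da tau a b = tau * (1 - a / sqrt (a\<^sup>2 + b\<^sup>2)) + (1 - tau) * (if 0 < a then pos b else 0)"

definition phi_db :: "real \<Rightarrow> real \<Rightarrow> real \<Rightarrow> real" where
  "phi_db tau a b = tau * (1 - b / sqrt (a\<^sup>2 + b\<^sup>2)) + (1 - tau) * (if 0 < b then pos a else 0)"

lemma pos_mult_has_derivative:
  fixes fa fb :: "'a::real_normed_vector \<Rightarrow> real"
  assumes smooth: "phi_smooth (fa w) (fb w)"
    and da: "(fa has_derivative Da) (at w)" and db: "(fb has_derivative Db) (at w)"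
  shows "((\<lambda>w. pos (fa w) * pos (fb w)) has_derivative
      (\<lambda>v. (if 0 < fa w then pos (fb w) else 0) * Da v + (if 0 < fb w then pos (fa w) else 0) * Db v))
    (at w)"
proof -
  have ca: "(fa \<longlongrightarrow> fa w) (at w)" using has_derivative_continuous[OF da] by (simp add: continuous_at)
  have cb: "(fb \<longlongrightarrow> fb w) (at w)" using has_derivative_continuous[OF db] by (simp add: continuous_at)
  consider "fa w < 0 \<or> fb w < 0" | "0 < fa w" "0 < fb w" using smooth unfolding phi_smooth_def by blast
  then show ?thesis
  proof cases
    case 1
    then have "\<forall>\<^sub>F u in at w. fa u < 0 \<or> fb u < 0"
      by (auto dest: order_tendstoD(2)[OF ca] order_tendstoD(2)[OF cb] elim: eventually_mono)
    then have "\<forall>\<^sub>F u in at w. 0 = pos (fa u) * pos (fb u)"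
      by eventually_elim (auto simp: pos_def)
    then have "((\<lambda>w. pos (fa w) * pos (fb w)) has_derivative (\<lambda>v. 0)) (at w)"
      by (rule has_derivative_transform_eventually[OF has_derivative_const])
        (use 1 in \<open>auto simp: pos_def\<close>)
    then show ?thesis using 1 by (auto simp: pos_def)
  next
    case 2
    then have "\<forall>\<^sub>F u in at w. 0 < fa u \<and> 0 < fb u"
      using order_tendstoD(1)[OF ca] order_tendstoD(1)[OF cb] eventually_conj by blast
    then have "\<forall>\<^sub>F u in at w. fa u * fb u = pos (fa u) * pos (fb u)"
      by eventually_elim (simp add: pos_def)
    then have "((\<lambda>w. pos (fa w) * pos (fb w)) has_derivative (\<lambda>v. fa w * Db v + Da v * fb w)) (at w)"
      by (rule has_derivative_transform_eventually[OF has_derivative_mult[OF da db]])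
        (use 2 in \<open>auto simp: pos_def\<close>)
    then show ?thesis using 2 by (simp add: pos_def algebra_simps)
  qed
qed

lemma phi_has_derivative:
  fixes fa fb :: "'a::real_normed_vector \<Rightarrow> real"
  assumes smooth: "phi_smooth (fa w) (fb w)"
    and da: "(fa has_derivative Da) (at w)" and db: "(fb has_derivative Db) (at w)"
  shows "((\<lambda>w. phi tau (fa w) (fb w)) has_derivative
      (\<lambda>v. phi_da tau (fa w) (fb w) * Da v + phi_db tau (fa w) (fb w) * Db v)) (at w)"
proof -
  define r where "r = sqrt ((fa w)\<^sup>2 + (fb w)\<^sup>2)"
  have "0 < (fa w)\<^sup>2 + (fb w)\<^sup>2"
    using smooth unfolding phi_smooth_def by (auto intro: add_pos_nonneg add_nonneg_pos)
  then have "0 < r" unfolding r_def by simp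
  have sqrt: "((\<lambda>w. sqrt ((fa w)\<^sup>2 + (fb w)\<^sup>2)) has_derivative
      (\<lambda>v. (fa w * Da v + fb w * Db v) / r)) (at w)"
    using \<open>0 < (fa w)\<^sup>2 + (fb w)\<^sup>2\<close>
    by (auto intro!: derivative_eq_intros da db simp: r_def divide_simps algebra_simps)
  have "((\<lambda>w. tau * (fa w + fb w - sqrt ((fa w)\<^sup>2 + (fb w)\<^sup>2)) + (1 - tau) * (pos (fa w) * pos (fb w)))
      has_derivative (\<lambda>v. tau * (Da v + Db v - (fa w * Da v + fb w * Db v) / r)
        + (1 - tau) * ((if 0 < fa w then pos (fb w) else 0) * Da v
          + (if 0 < fb w then pos (fa w) else 0) * Db v))) (at w)"
    by (intro derivative_intros da db sqrt pos_mult_has_derivative smooth)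
  moreover have "(\<lambda>v. tau * (Da v + Db v - (fa w * Da v + fb w * Db v) / r)
        + (1 - tau) * ((if 0 < fa w then pos (fb w) else 0) * Da v
          + (if 0 < fb w then pos (fa w) else 0) * Db v))
      = (\<lambda>v. phi_da tau (fa w) (fb w) * Da v + phi_db tau (fa w) (fb w) * Db v)"
    using \<open>0 < r\<close> by (auto simp: phi_da_def phi_db_def r_def[symmetric] field_simps)
  ultimately show ?thesis by (simp add: phi_def mult.assoc)
qed

definition phi_partials_tendsto ::
    "real \<Rightarrow> (real \<Rightarrow> real) \<Rightarrow> (real \<Rightarrow> real) \<Rightarrow> real \<Rightarrow> real \<Rightarrow> bool" where
  "phi_partials_tendsto tau a b PA PB \<longleftrightarrow>
     (\<forall>\<^sub>F e in at_right 0. phi_smooth (a e) (b e))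
     \<and> ((\<lambda>e. phi_da tau (a e) (b e)) \<longlongrightarrow> PA) (at_right 0)
     \<and> ((\<lambda>e. phi_db tau (a e) (b e)) \<longlongrightarrow> PB) (at_right 0)"

lemma phi_partials_tendsto_pos:
  assumes a: "(a \<longlongrightarrow> x) (at_right 0)" and b: "(b \<longlongrightarrow> y) (at_right 0)" and "0 < x" "0 < y"
  shows "phi_partials_tendsto tau a b
    (tau * (1 - x / norm (x, y)) + (1 - tau) * y) (tau * (1 - y / norm (x, y)) + (1 - tau) * x)"
proof -
  have pos: "\<forall>\<^sub>F e in at_right 0. 0 < a e \<and> 0 < b e"
    using order_tendstoD(1)[OF a \<open>0 < x\<close>] order_tendstoD(1)[OF b \<open>0 < y\<close>] by (rule eventually_conj)
  have xy: "(x, y) \<noteq> 0" using \<open>0 < x\<close> by (simp add: zero_prod_def)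
  have "((\<lambda>e. tau * (1 - a e / sqrt ((a e)\<^sup>2 + (b e)\<^sup>2)) + (1 - tau) * b e)
      \<longlongrightarrow> tau * (1 - x / norm (x, y)) + (1 - tau) * y) (at_right 0)"
    by (intro tendsto_intros tendsto_div_sqrt_sum_squares a b xy)
  then have da: "((\<lambda>e. phi_da tau (a e) (b e))
      \<longlongrightarrow> tau * (1 - x / norm (x, y)) + (1 - tau) * y) (at_right 0)"
    by (rule Lim_transform_eventually) (rule eventually_mono[OF pos], simp add: phi_da_def pos_def)
  have "((\<lambda>e. tau * (1 - b e / sqrt ((a e)\<^sup>2 + (b e)\<^sup>2)) + (1 - tau) * a e)
      \<longlongrightarrow> tau * (1 - y / norm (x, y)) + (1 - tau) * x) (at_right 0)"
    by (intro tendsto_intros tendsto_div_sqrt_sum_squares a b xy)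
  then have db: "((\<lambda>e. phi_db tau (a e) (b e))
      \<longlongrightarrow> tau * (1 - y / norm (x, y)) + (1 - tau) * x) (at_right 0)"
    by (rule Lim_transform_eventually) (rule eventually_mono[OF pos], simp add: phi_db_def pos_def)
  show ?thesis
    unfolding phi_partials_tendsto_def using da db pos
    by (auto elim: eventually_mono simp: phi_smooth_def)
qed

lemma phi_partials_tendsto_neg:
  assumes a: "(a \<longlongrightarrow> x) (at_right 0)" and b: "(b \<longlongrightarrow> y) (at_right 0)" and xy: "(x, y) \<noteq> 0"
    and neg: "\<forall>\<^sub>F e in at_right 0. a e < 0 \<or> b e < 0"
  shows "phi_partials_tendsto tau a b (tau * (1 - x / norm (x, y))) (tau * (1 - y / norm (x, y)))"
proof -
  have "((\<lambda>e. tau * (1 - a e / sqrt ((a e)\<^sup>2 + (b e)\<^sup>2))) \<longlongrightarrow> tau * (1 - x / norm (x, y))) (at_right 0)"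
    by (intro tendsto_intros tendsto_div_sqrt_sum_squares a b xy)
  then have da: "((\<lambda>e. phi_da tau (a e) (b e)) \<longlongrightarrow> tau * (1 - x / norm (x, y))) (at_right 0)"
    by (rule Lim_transform_eventually) (rule eventually_mono[OF neg], auto simp: phi_da_def pos_def)
  have "((\<lambda>e. tau * (1 - b e / sqrt ((a e)\<^sup>2 + (b e)\<^sup>2))) \<longlongrightarrow> tau * (1 - y / norm (x, y))) (at_right 0)"
    by (intro tendsto_intros tendsto_div_sqrt_sum_squares a b xy)
  then have db: "((\<lambda>e. phi_db tau (a e) (b e)) \<longlongrightarrow> tau * (1 - y / norm (x, y))) (at_right 0)"
    by (rule Lim_transform_eventually) (rule eventually_mono[OF neg], auto simp: phi_db_def pos_def)
  show ?thesis
    unfolding phi_partials_tendsto_def using da db neg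
    by (auto elim: eventually_mono simp: phi_smooth_def)
qed

text \<open>The square-root parts of the partials are homogeneous of degree 0, so rescaling by \<open>\<epsilon>\<close>
  reduces the corner to the pair \<open>(-1, b \<epsilon> / \<epsilon>)\<close>.\<close>

lemma phi_partials_tendsto_corner:
  assumes a: "\<And>e. a e = - e" and q: "((\<lambda>e. b e / e) \<longlongrightarrow> - s) (at_right 0)"
  shows "phi_partials_tendsto tau a b
    (tau * (1 + 1 / norm (1::real, s))) (tau * (1 + s / norm (1::real, s)))"
proof -
  have epos: "\<forall>\<^sub>F e in at_right (0::real). 0 < e" by (rule eventually_at_right_less)
  have scaled: "\<forall>\<^sub>F e in at_right 0.
      phi_da tau (a e) (b e) = tau * (1 + 1 / sqrt (1 + (b e / e)\<^sup>2))
    \<and> phi_db tau (a e) (b e) = tau * (1 - (b e / e) / sqrt (1 + (b e / e)\<^sup>2))"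
    using epos
  proof eventually_elim
    case (elim e)
    have "0 < sqrt (1 + (b e / e)\<^sup>2)" by (simp add: add_pos_nonneg)
    moreover have "sqrt ((a e)\<^sup>2 + (b e)\<^sup>2) = e * sqrt (1 + (b e / e)\<^sup>2)"
      using sqrt_sum_squares_scale[OF elim, of "a e" "b e"] elim by (simp add: a)
    ultimately show ?case using elim by (simp add: phi_da_def phi_db_def pos_def a)
  qed
  have norm: "norm (- 1 :: real, - s) = norm (1::real, s)" by (simp add: norm_Pair)
  have "(- 1 :: real, - s) \<noteq> 0" by (simp add: zero_prod_def)
  note lim = tendsto_div_sqrt_sum_squares[OF tendsto_const q this, unfolded norm]
  have "((\<lambda>e. tau * (1 + 1 / sqrt (1 + (b e / e)\<^sup>2))) \<longlongrightarrow> tau * (1 + 1 / norm (1::real, s))) (at_right 0)"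
    using tendsto_mult[OF tendsto_const tendsto_diff[OF tendsto_const lim(1)], of tau 1] by simp
  then have da: "((\<lambda>e. phi_da tau (a e) (b e)) \<longlongrightarrow> tau * (1 + 1 / norm (1::real, s))) (at_right 0)"
    by (rule Lim_transform_eventually) (use scaled in \<open>auto elim: eventually_mono\<close>)
  have "((\<lambda>e. tau * (1 - (b e / e) / sqrt (1 + (b e / e)\<^sup>2))) \<longlongrightarrow> tau * (1 + s / norm (1::real, s)))
      (at_right 0)"
    using tendsto_mult[OF tendsto_const tendsto_diff[OF tendsto_const lim(2)], of tau 1] by simp
  then have db: "((\<lambda>e. phi_db tau (a e) (b e)) \<longlongrightarrow> tau * (1 + s / norm (1::real, s))) (at_right 0)"
    by (rule Lim_transform_eventually) (use scaled in \<open>auto elim: eventually_mono\<close>)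
  show ?thesis
    unfolding phi_partials_tendsto_def using da db epos
    by (auto elim: eventually_mono simp: phi_smooth_def a)
qed

lemma phi_partials_tendsto_edge:
  assumes a: "(a \<longlongrightarrow> x) (at_right 0)" and "0 < x"
    and q: "((\<lambda>e. b e / e) \<longlongrightarrow> - s) (at_right 0)" and "s \<noteq> 0"
  shows "phi_partials_tendsto tau a b 0 (if s < 0 then tau + (1 - tau) * x else tau)"
proof -
  note b = tendsto_slope_at_right_0D(1)[OF q]
  have apos: "\<forall>\<^sub>F e in at_right 0. 0 < a e" by (rule order_tendstoD(1)[OF a \<open>0 < x\<close>])
  have bsign: "\<forall>\<^sub>F e in at_right 0. (s < 0 \<longrightarrow> 0 < b e) \<and> (0 < s \<longrightarrow> b e < 0)"
    using \<open>s \<noteq> 0\<close> tendsto_slope_at_right_0D(2,3)[OF q]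
    by (cases "s < 0") (auto elim: eventually_mono)
  have "(x, 0::real) \<noteq> 0" using \<open>0 < x\<close> by (simp add: zero_prod_def)
  note lim = tendsto_div_sqrt_sum_squares[OF a b this]
  have "norm (x, 0::real) = x" using \<open>0 < x\<close> by (simp add: norm_Pair)
  note lim = lim[unfolded this]
  have "((\<lambda>e. tau * (1 - a e / sqrt ((a e)\<^sup>2 + (b e)\<^sup>2)) + (1 - tau) * pos (b e))
      \<longlongrightarrow> tau * (1 - x / x) + (1 - tau) * pos 0) (at_right 0)"
    unfolding pos_def by (intro tendsto_intros lim b)
  then have "((\<lambda>e. tau * (1 - a e / sqrt ((a e)\<^sup>2 + (b e)\<^sup>2)) + (1 - tau) * pos (b e)) \<longlongrightarrow> 0)
      (at_right 0)"
    using \<open>0 < x\<close> by (simp add: pos_def)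
  then have da: "((\<lambda>e. phi_da tau (a e) (b e)) \<longlongrightarrow> 0) (at_right 0)"
    by (rule Lim_transform_eventually) (use apos in \<open>eventually_elim, simp add: phi_da_def\<close>)
  have tau: "((\<lambda>e. tau * (1 - b e / sqrt ((a e)\<^sup>2 + (b e)\<^sup>2))) \<longlongrightarrow> tau) (at_right 0)"
    using tendsto_mult[OF tendsto_const tendsto_diff[OF tendsto_const lim(2)], of tau 1] by simp
  have db: "((\<lambda>e. phi_db tau (a e) (b e)) \<longlongrightarrow> (if s < 0 then tau + (1 - tau) * x else tau)) (at_right 0)"
  proof (cases "s < 0")
    case True
    have "((\<lambda>e. tau * (1 - b e / sqrt ((a e)\<^sup>2 + (b e)\<^sup>2)) + (1 - tau) * a e)
        \<longlongrightarrow> tau + (1 - tau) * x) (at_right 0)"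
      by (intro tendsto_intros tau a)
    then have "((\<lambda>e. phi_db tau (a e) (b e)) \<longlongrightarrow> tau + (1 - tau) * x) (at_right 0)"
      by (rule Lim_transform_eventually)
        (use apos bsign in \<open>eventually_elim, use True in \<open>simp add: phi_db_def pos_def\<close>\<close>)
    with True show ?thesis by simp
  next
    case False
    with \<open>s \<noteq> 0\<close> have "0 < s" by simp
    from tau have "((\<lambda>e. phi_db tau (a e) (b e)) \<longlongrightarrow> tau) (at_right 0)"
      by (rule Lim_transform_eventually)
        (use bsign in \<open>eventually_elim, use \<open>0 < s\<close> in \<open>simp add: phi_db_def\<close>\<close>)
    with False show ?thesis by simp
  qed
  have "\<forall>\<^sub>F e in at_right 0. phi_smooth (a e) (b e)"
    using apos bsign by eventually_elim (use \<open>s \<noteq> 0\<close> in \<open>auto simp: phi_smooth_def\<close>)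
  with da db show ?thesis unfolding phi_partials_tendsto_def by blast
qed

definition procP_coeff :: "real \<Rightarrow> real \<Rightarrow> real \<Rightarrow> real \<Rightarrow> real \<Rightarrow> real \<times> real" where
  "procP_coeff tau x f c s =
    (if x = 0 \<and> f = 0 then (tau * (1 + c / norm (c, s)), tau * (1 + s / norm (c, s)))
     else if 0 < x \<and> f = 0 then (0, if s < 0 then tau + (1 - tau) * x else tau)
     else if 0 < x \<and> 0 < f then
       (tau * (1 - x / norm (x, f)) + (1 - tau) * f, tau * (1 - f / norm (x, f)) + (1 - tau) * x)
     else (tau * (1 - x / norm (x, f)), tau * (1 - f / norm (x, f))))"

lemma procP_eq_procP_coeff:
  "procP tau F z i =
    fst (procP_coeff tau (fst z $ i) (F z $ i) (cvec F z $ i) (sval F z i)) *\<^sub>R (axis i 1, 0)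
    + snd (procP_coeff tau (fst z $ i) (F z $ i) (cvec F z $ i) (sval F z i)) *\<^sub>R gradF F z i"
  by (simp add: procP_def procP_coeff_def Let_def S1_def S3_def S4_def zero_prod_def)

lemma phi_partials_tendsto_procP_coeff:
  fixes a b :: "real \<Rightarrow> real"
  assumes a: "\<And>e. a e = x - e * c"
    and c: "c = (if x = 0 \<and> f = 0 \<or> x = 0 \<and> 0 < f \<or> 0 < x \<and> f = 0 then 1 else 0)"
    and b: "(b \<longlongrightarrow> f) (at_right 0)" and q: "((\<lambda>e. (b e - f) / e) \<longlongrightarrow> - s) (at_right 0)"
    and nondegenerate: "0 < x \<Longrightarrow> f = 0 \<Longrightarrow> s \<noteq> 0"
  shows "phi_partials_tendsto tau a b (fst (procP_coeff tau x f c s)) (snd (procP_coeff tau x f c s))"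
proof -
  have "(a \<longlongrightarrow> x) (at_right 0)" unfolding a by (auto intro!: tendsto_eq_intros)
  consider (S1) "x = 0" "f = 0" | (S3) "0 < x" "f = 0" | (S4) "0 < x" "0 < f"
    | (other) "\<not> (x = 0 \<and> f = 0)" "\<not> (0 < x \<and> f = 0)" "\<not> (0 < x \<and> 0 < f)"
    by blast
  then show ?thesis
  proof cases
    case S1
    then show ?thesis using phi_partials_tendsto_corner[of a b s] q c by (simp add: a procP_coeff_def)
  next
    case S3
    then show ?thesis
      using phi_partials_tendsto_edge[OF \<open>(a \<longlongrightarrow> x) (at_right 0)\<close> \<open>0 < x\<close> _ nondegenerate] q
      by (simp add: procP_coeff_def)
  next
    case S4
    then show ?thesis
      using phi_partials_tendsto_pos[OF \<open>(a \<longlongrightarrow> x) (at_right 0)\<close> b S4] by (simp add: procP_coeff_def)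
  next
    case other
    then consider "x = 0" "0 < f" | "x < 0" | "f < 0" by linarith
    then have "\<forall>\<^sub>F e in at_right 0. a e < 0 \<or> b e < 0"
    proof cases
      case 1
      show ?thesis
        using eventually_at_right_less[of "0::real"] by eventually_elim (use 1 in \<open>simp add: a c\<close>)
    next
      case 2
      then show ?thesis by (simp add: a c)
    next
      case 3
      from order_tendstoD(2)[OF b this] show ?thesis by eventually_elim simp
    qed
    moreover have "(x, f) \<noteq> 0" using other by (simp add: zero_prod_def)
    moreover have "procP_coeff tau x f c s = (tau * (1 - x / norm (x, f)), tau * (1 - f / norm (x, f)))"
      using other by (auto simp: procP_coeff_def)
    ultimately show ?thesis using phi_partials_tendsto_neg[OF \<open>(a \<longlongrightarrow> x) (at_right 0)\<close> b] by simp
  qed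
qed

lemma procP_row_partials_limit:
  fixes F :: "(real^'n::finite) \<times> real \<Rightarrow> real^'n" and z :: "(real^'n) \<times> real"
  assumes dF: "((\<lambda>w. F w $ i) has_derivative (\<lambda>h. h \<bullet> gradF F z i)) (at z)"
    and nondegenerate: "i \<in> S3 F z \<Longrightarrow> sval F z i \<noteq> 0"
  obtains PA PB where "procP tau F z i = PA *\<^sub>R (axis i 1, 0) + PB *\<^sub>R gradF F z i"
    and "phi_partials_tendsto tau (\<lambda>e. fst z $ i - e * cvec F z $ i)
      (\<lambda>e. F (z - e *\<^sub>R (cvec F z, 0)) $ i) PA PB"
proof -
  have "(cvec F z, 0) \<bullet> gradF F z i = sval F z i"
    by (simp add: sval_def gradxF_def inner_Pair_0 inner_commute)
  then have b: "((\<lambda>e. F (z - e *\<^sub>R (cvec F z, 0)) $ i) \<longlongrightarrow> F z $ i) (at_right 0)"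
    and q: "((\<lambda>e. (F (z - e *\<^sub>R (cvec F z, 0)) $ i - F z $ i) / e) \<longlongrightarrow> - sval F z i) (at_right 0)"
    using has_derivative_along_ray[OF dF, of "(cvec F z, 0)"] by simp_all
  have "phi_partials_tendsto tau
      (\<lambda>e. fst z $ i - e * cvec F z $ i) (\<lambda>e. F (z - e *\<^sub>R (cvec F z, 0)) $ i)
      (fst (procP_coeff tau (fst z $ i) (F z $ i) (cvec F z $ i) (sval F z i)))
      (snd (procP_coeff tau (fst z $ i) (F z $ i) (cvec F z $ i) (sval F z i)))"
    by (rule phi_partials_tendsto_procP_coeff[OF _ _ b q])
      (use nondegenerate in \<open>auto simp: cvec_def S1_def S2_def S3_def\<close>)
  with procP_eq_procP_coeff show ?thesis by (rule that)
qed

definition Hphi ::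
    "real \<Rightarrow> ((real^'n::finite) \<times> real \<Rightarrow> real^'n) \<Rightarrow> (real^'n) \<times> real \<Rightarrow> (real^'n) \<times> real"
  where "Hphi tau F z = ((\<chi> i. phi tau (fst z $ i) (F z $ i)), fst z \<bullet> fst z - 1)"

lemma HH_eq_Hphi: "HH m A B tau = Hphi tau (FF m A B)"
  by (simp add: fun_eq_iff HH_def Hphi_def)

definition Hphi_deriv :: "real \<Rightarrow> ((real^'n::finite) \<times> real \<Rightarrow> real^'n)
    \<Rightarrow> (real^'n) \<times> real \<Rightarrow> (real^'n) \<times> real \<Rightarrow> (real^'n) \<times> real" where
  "Hphi_deriv tau F w v =
    ((\<chi> i. phi_da tau (fst w $ i) (F w $ i) * fst v $ i
        + phi_db tau (fst w $ i) (F w $ i) * (v \<bullet> gradF F w i)),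
     2 * (fst w \<bullet> fst v))"

lemma Hphi_has_derivative:
  fixes F :: "(real^'n::finite) \<times> real \<Rightarrow> real^'n"
  assumes dF: "\<And>i. ((\<lambda>w. F w $ i) has_derivative (\<lambda>h. h \<bullet> gradF F w i)) (at w)"
    and smooth: "\<And>i. phi_smooth (fst w $ i) (F w $ i)"
  shows "(Hphi tau F has_derivative Hphi_deriv tau F w) (at w)"
proof -
  have coord: "((\<lambda>w. fst w $ i) has_derivative (\<lambda>v. fst v $ i)) (at w)" for i
    by (intro bounded_linear_imp_has_derivative
        bounded_linear_compose[OF bounded_linear_vec_nth bounded_linear_fst])
  have "((\<lambda>w. \<chi> i. phi tau (fst w $ i) (F w $ i)) has_derivative
      (\<lambda>v. \<chi> i. phi_da tau (fst w $ i) (F w $ i) * fst v $ i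
        + phi_db tau (fst w $ i) (F w $ i) * (v \<bullet> gradF F w i))) (at w)"
    by (intro has_derivative_vec_lambda phi_has_derivative smooth coord dF)
  moreover have "((\<lambda>w. fst w \<bullet> fst w - 1) has_derivative (\<lambda>v. 2 * (fst w \<bullet> fst v))) (at w)"
    by (auto intro!: derivative_eq_intros simp: inner_commute)
  ultimately show ?thesis
    unfolding Hphi_def[abs_def] Hphi_deriv_def[abs_def] by (rule has_derivative_Pair)
qed

lemma procP_Jacobian_in_Bsubdiff:
  fixes F :: "(real^'n::finite) \<times> real \<Rightarrow> real^'n" and z :: "(real^'n) \<times> real"
  assumes dF: "\<And>i w. ((\<lambda>w. F w $ i) has_derivative (\<lambda>h. h \<bullet> gradF F w i)) (at w)"
    and grad_cont: "\<And>i v. isCont (\<lambda>w. v \<bullet> gradF F w i) z"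
    and nondegenerate: "\<forall>i\<in>S3 F z. sval F z i \<noteq> 0"
  shows "(\<lambda>v. ((\<chi> i. procP tau F z i \<bullet> v), (2 *\<^sub>R fst z, 0::real) \<bullet> v)) \<in> Bsubdiff (Hphi tau F) z"
proof -
  define \<gamma> where "\<gamma> e = z - e *\<^sub>R (cvec F z, 0::real)" for e
  have "\<exists>PA PB. procP tau F z i = PA *\<^sub>R (axis i 1, 0) + PB *\<^sub>R gradF F z i
      \<and> phi_partials_tendsto tau (\<lambda>e. fst (\<gamma> e) $ i) (\<lambda>e. F (\<gamma> e) $ i) PA PB" for i
    by (rule procP_row_partials_limit[OF dF, of i z tau]) (use nondegenerate in \<open>auto simp: \<gamma>_def\<close>)
  then obtain PA PB where row: "\<And>i. procP tau F z i = PA i *\<^sub>R (axis i 1, 0) + PB i *\<^sub>R gradF F z i"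
    and lim: "\<And>i. phi_partials_tendsto tau (\<lambda>e. fst (\<gamma> e) $ i) (\<lambda>e. F (\<gamma> e) $ i) (PA i) (PB i)"
    by metis
  have \<gamma>: "(\<gamma> \<longlongrightarrow> z) (at_right 0)"
    unfolding \<gamma>_def by (auto intro!: tendsto_eq_intros simp: zero_prod_def)
  have "\<forall>\<^sub>F e in at_right 0. \<forall>i. phi_smooth (fst (\<gamma> e) $ i) (F (\<gamma> e) $ i)"
    using lim by (intro eventually_all_finite) (simp add: phi_partials_tendsto_def)
  then have "\<forall>\<^sub>F e in at_right 0. (Hphi tau F has_derivative Hphi_deriv tau F (\<gamma> e)) (at (\<gamma> e))"
    by eventually_elim (simp add: Hphi_has_derivative dF)
  moreover have "((\<lambda>e. Hphi_deriv tau F (\<gamma> e) v)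
      \<longlongrightarrow> ((\<chi> i. procP tau F z i \<bullet> v), (2 *\<^sub>R fst z, 0::real) \<bullet> v)) (at_right 0)" for v
  proof -
    have row_v: "procP tau F z i \<bullet> v = PA i * fst v $ i + PB i * (v \<bullet> gradF F z i)" for i
      by (cases v) (simp add: row inner_add_left inner_axis' inner_commute[of "gradF F z i"])
    have grad: "((\<lambda>e. v \<bullet> gradF F (\<gamma> e) i) \<longlongrightarrow> v \<bullet> gradF F z i) (at_right 0)" for i
      by (rule isCont_tendsto_compose[OF grad_cont \<gamma>])
    have "((\<lambda>e. phi_da tau (fst (\<gamma> e) $ i) (F (\<gamma> e) $ i) * fst v $ i
        + phi_db tau (fst (\<gamma> e) $ i) (F (\<gamma> e) $ i) * (v \<bullet> gradF F (\<gamma> e) i))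
        \<longlongrightarrow> procP tau F z i \<bullet> v) (at_right 0)" for i
      unfolding row_v using lim[of i]
      by (intro tendsto_add tendsto_mult tendsto_const grad) (simp_all add: phi_partials_tendsto_def)
    moreover have "((\<lambda>e. 2 * (fst (\<gamma> e) \<bullet> fst v)) \<longlongrightarrow> (2 *\<^sub>R fst z, 0::real) \<bullet> v) (at_right 0)"
      using \<gamma> by (cases v) (auto intro!: tendsto_intros)
    ultimately show ?thesis
      unfolding Hphi_deriv_def by (intro tendsto_Pair tendsto_vec_lambda)
  qed
  ultimately show ?thesis by (rule Bsubdiff_along_curve[OF \<gamma>])
qed

theorem theorem2:
  fixes m :: nat and A B :: "('n::finite) tensor" and tau :: real and z :: "(real^'n) \<times> real"
  assumes "even m" and "m \<ge> 2"
    and "symmetric_tensor m B"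
    and "\<forall>x::real^'n. x \<noteq> 0 \<longrightarrow> tpow m B x > 0"
    and "0 < tau" and "tau < 1"
    and "\<forall>i\<in>S3 (FF m A B) z. sval (FF m A B) z i \<noteq> 0"
  shows "(\<lambda>v. ((\<chi> i. procP tau (FF m A B) z i \<bullet> v), (2 *\<^sub>R fst z, 0::real) \<bullet> v))
           \<in> Bsubdiff (HH m A B tau) z"
proof -
  note poly = real_polynomial_function_FF[of m A B]
  have "((\<lambda>w. FF m A B w $ i) has_derivative (\<lambda>h. h \<bullet> gradF (FF m A B) w i)) (at w)" for i w
    unfolding gradF_def by (rule real_polynomial_function_grad(1)[OF poly])
  moreover have "isCont (\<lambda>w. v \<bullet> gradF (FF m A B) w i) z" for i v
    unfolding gradF_def
    by (rule continuous_real_polymonial_function[OF real_polynomial_function_grad(2)[OF poly]])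
  ultimately show ?thesis
    unfolding HH_eq_Hphi using assms(7) by (rule procP_Jacobian_in_Bsubdiff)
qed

end
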